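(* For any integers $W\ge6$, $L\ge2$, $s\in\mathbb{N}$ and any $\xi_i\in[0,1]$ for $i=0,1,\dots,W^2L^2-1$, there exists a ReLU network $\phi:\mathbb{R}\to\mathbb{R}$ with $$\phi\in\mathcal{NN}\big(8s(2W+1)\lceil\log_2(2W)\rceil+2,\ 4L\lceil\log_2(2L)\rceil+1\big)$$ such that $\mathrm{Lip}\,\phi\le4\cdot2^{L^2}+2L^2$, $|\phi(i)-\xi_i|\le(WL)^{-2s}$ for $i=0,1,\dots,W^2L^2-1$, and $\phi(t)\in[0,1]$ for all $t\in\mathbb{R}$.
   Context: $\sigma(x)=\max(x,0)$. $\mathcal{NN}(W,L)$: functions $\phi(x)=T_L(\sigma(T_{L-1}(\cdots\sigma(T_0(x))\cdots)))$ with affine maps $T_l$, ReLU componentwise, all hidden layer sizes $\le W$ and depth $\le L$. $\mathrm{Lip}\,\phi$ is the Lipschitz constant of $\phi$. *)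

theory Defs
  imports "HOL-Analysis.Analysis"
begin

definition relu :: "real \<Rightarrow> real" where
  "relu x = max x 0"

text \<open>An affine layer \<open>T(x) = A x + b\<close>, with the matrix \<open>A\<close> given as a list of rows
  and the bias \<open>b\<close> as a list.\<close>
type_synonym layer = "real list list \<times> real list"

definition affine :: "layer \<Rightarrow> real list \<Rightarrow> real list" where
  "affine T x = map2 (\<lambda>row bi. (\<Sum>j<length x. row ! j * x ! j) + bi) (fst T) (snd T)"

definition layer_dims :: "layer \<Rightarrow> nat \<Rightarrow> nat \<Rightarrow> bool" where
  "layer_dims T n m \<longleftrightarrow> length (fst T) = m \<and> length (snd T) = m \<and>
     (\<forall>row \<in> set (fst T). length row = n)"

fun eval_net :: "layer list \<Rightarrow> real list \<Rightarrow> real list" where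
  "eval_net [] x = x"
| "eval_net [T] x = affine T x"
| "eval_net (T # Ts) x = eval_net Ts (map relu (affine T x))"

text \<open>\<open>NN(W,L)\<close>: scalar functions \<open>\<real> \<rightarrow> \<real>\<close> realised by a ReLU network
  \<open>[T_0,\<dots>,T_k]\<close> with \<open>k \<le> L\<close> hidden layers, each of size at most \<open>W\<close>.
  \<open>ds\<close> lists the layer dimensions \<open>d_0 = 1, d_1, \<dots>, d_k, d_{k+1} = 1\<close>.\<close>
definition NN :: "nat \<Rightarrow> nat \<Rightarrow> (real \<Rightarrow> real) set" where
  "NN W L = {\<phi>. \<exists>net ds.
      net \<noteq> [] \<and> length ds = length net + 1 \<and>
      ds ! 0 = 1 \<and> ds ! length net = 1 \<and>
      (\<forall>i < length net. layer_dims (net ! i) (ds ! i) (ds ! Suc i)) \<and>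
      (\<forall>i. 1 \<le> i \<and> i < length net \<longrightarrow> ds ! i \<le> W) \<and>
      length net - 1 \<le> L \<and>
      (\<forall>t. \<phi> t = hd (eval_net net [t]))}"

end

theory Submission
  imports Defs
begin

text \<open>The \<open>W\<^sup>2 L\<^sup>2\<close> indices are cut into blocks of \<open>R\<close> consecutive integers. Since the
  tent map \<open>T\<close> doubles distances on each of its two branches, the \<open>R\<close> values of block \<open>m\<close> can be
  stored, up to \<open>2 ^ - P\<close>, in one number \<open>x\<^sub>m \<in> [0, 1]\<close> with \<open>T ^^ (\<rho> P) x\<^sub>m \<approx> \<xi> (m R + \<rho>)\<close>.
  From \<open>t\<close> the network first computes two piecewise linear functions: \<open>X t\<close>, equal to \<open>x\<^sub>m\<close>
  on block \<open>m\<close>, and the offset \<open>r t\<close>, equal to \<open>\<rho>\<close> at \<open>t = m R + \<rho>\<close>. Each is a sum of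
  hinges \<open>\<alpha> * relu (t - \<tau>)\<close>, and \<open>J K\<close> hinges fit into two hidden layers of width
  \<open>O(J + K)\<close>, because they can be grouped into bumps with disjoint supports. The network then
  iterates \<open>T\<close> on \<open>X t\<close> and adds up \<open>relu (T ^^ (\<rho>' P) (X t) - \<bar>r t - \<rho>'\<bar>)\<close> over \<open>\<rho>' < R\<close>,
  which selects \<open>T ^^ (\<rho> P) x\<^sub>m\<close> at the data points, and clamps the result to \<open>[0, 1]\<close>. Its
  Lipschitz constant is governed by \<open>2 ^ ((R - 1) P)\<close>, from the iterated tent map, and by
  \<open>R\<^sup>2\<close>, from the offset.\<close>

section \<open>ReLU networks built from affine maps\<close>

definition affine_map ::
    "nat \<Rightarrow> nat \<Rightarrow> (nat \<Rightarrow> nat \<Rightarrow> real) \<Rightarrow> (nat \<Rightarrow> real) \<Rightarrow> real list \<Rightarrow> real list" where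
  "affine_map n m A b x = map (\<lambda>i. (\<Sum>j<n. A i j * x ! j) + b i) [0..<m]"

definition layer_of :: "nat \<Rightarrow> nat \<Rightarrow> (nat \<Rightarrow> nat \<Rightarrow> real) \<Rightarrow> (nat \<Rightarrow> real) \<Rightarrow> layer" where
  "layer_of n m A b = (map (\<lambda>i. map (A i) [0..<n]) [0..<m], map b [0..<m])"

lemma length_affine_map [simp]: "length (affine_map n m A b x) = m"
  by (simp add: affine_map_def)

lemma nth_affine_map [simp]: "i < m \<Longrightarrow> affine_map n m A b x ! i = (\<Sum>j<n. A i j * x ! j) + b i"
  by (simp add: affine_map_def)

lemma layer_dims_layer_of: "layer_dims (layer_of n m A b) n m"
  by (auto simp: layer_dims_def layer_of_def)

lemma affine_layer_of: "length x = n \<Longrightarrow> affine (layer_of n m A b) x = affine_map n m A b x"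
  by (rule nth_equalityI) (auto simp: affine_def layer_of_def)

lemma affine_eq_affine_map:
  assumes "layer_dims T n m" "length x = n"
  shows "affine T x = affine_map n m (\<lambda>i j. fst T ! i ! j) (\<lambda>i. snd T ! i) x"
  using assms by (intro nth_equalityI) (auto simp: affine_def layer_dims_def)

lemma affine_map_comp:
  "affine_map m p C d (affine_map n m A b x) =
   affine_map n p (\<lambda>i j. \<Sum>k<m. C i k * A k j) (\<lambda>i. (\<Sum>k<m. C i k * b k) + d i) x"
proof (rule nth_equalityI)
  fix i assume "i < length (affine_map m p C d (affine_map n m A b x))"
  then have i: "i < p" by simp
  have "(\<Sum>k<m. C i k * ((\<Sum>j<n. A k j * x ! j) + b k)) =
        (\<Sum>j<n. (\<Sum>k<m. C i k * A k j) * x ! j) + (\<Sum>k<m. C i k * b k)"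
    by (simp add: distrib_left sum.distrib sum_distrib_left sum_distrib_right mult.assoc
        sum.swap[of _ "{..<m}"])
  then show "affine_map m p C d (affine_map n m A b x) ! i =
      affine_map n p (\<lambda>i j. \<Sum>k<m. C i k * A k j) (\<lambda>i. (\<Sum>k<m. C i k * b k) + d i) x ! i"
    using i by simp
qed simp

lemma affine_map_append:
  "affine_map n m1 A1 b1 x @ affine_map n m2 A2 b2 x =
   affine_map n (m1 + m2) (\<lambda>i. if i < m1 then A1 i else A2 (i - m1))
     (\<lambda>i. if i < m1 then b1 i else b2 (i - m1)) x"
  by (rule nth_equalityI) (auto simp: nth_append)

lemma take_eq_affine_map:
  "length x = n1 + n2 \<Longrightarrow> take n1 x = affine_map (n1 + n2) n1 (\<lambda>i j. of_bool (i = j)) (\<lambda>_. 0) x"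
  by (rule nth_equalityI) auto

lemma drop_eq_affine_map:
  "length x = n1 + n2 \<Longrightarrow> drop n1 x = affine_map (n1 + n2) n2 (\<lambda>i j. of_bool (j = i + n1)) (\<lambda>_. 0) x"
  by (rule nth_equalityI) (auto simp: add.commute)

inductive net_fun :: "nat \<Rightarrow> nat \<Rightarrow> nat \<Rightarrow> nat \<Rightarrow> (real list \<Rightarrow> real list) \<Rightarrow> bool" where
  output_layer: "(\<And>x. length x = n \<Longrightarrow> F x = affine_map n m A b x) \<Longrightarrow> net_fun n m W 0 F"
| hidden_layer: "w \<le> W \<Longrightarrow> net_fun w m W d G \<Longrightarrow>
    (\<And>x. length x = n \<Longrightarrow> F x = G (map relu (affine_map n w A b x))) \<Longrightarrow>
    net_fun n m W (Suc d) F"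

lemma net_fun_cong:
  assumes "net_fun n m W d F" and FG: "\<And>x. length x = n \<Longrightarrow> F x = G x"
  shows "net_fun n m W d G"
  using assms(1)
proof cases
  case (output_layer A b)
  have "net_fun n m W 0 G"
    by (rule net_fun.output_layer[of n G m A b]) (use output_layer FG in auto)
  then show ?thesis using output_layer by simp
next
  case (hidden_layer w d' H A b)
  have "net_fun n m W (Suc d') G"
    by (rule net_fun.hidden_layer[of w W m d' H n G A b]) (use hidden_layer FG in auto)
  then show ?thesis using hidden_layer by simp
qed

lemma net_fun_mono: "net_fun n m W d F \<Longrightarrow> W \<le> W' \<Longrightarrow> net_fun n m W' d F"
  by (induction rule: net_fun.induct) (auto intro: net_fun.intros dest: order_trans)

lemma net_fun_weaken:
  "net_fun n m W d F \<Longrightarrow> m = m' \<Longrightarrow> W \<le> W' \<Longrightarrow> d = d' \<Longrightarrow> (\<And>x. length x = n \<Longrightarrow> F x = G x) \<Longrightarrow>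
   net_fun n m' W' d' G"
  using net_fun_cong net_fun_mono by blast

lemma net_fun_affine_map: "net_fun n m W 0 (affine_map n m A b)"
  by (rule net_fun.output_layer) simp

lemma net_fun_hidden_affine:
  "w \<le> W \<Longrightarrow> net_fun w m W d G \<Longrightarrow> net_fun n m W (Suc d) (\<lambda>x. G (map relu (affine_map n w A b x)))"
  by (rule net_fun.hidden_layer) auto

lemma net_fun_post_affine:
  "net_fun n m W d F \<Longrightarrow> net_fun n p W d (\<lambda>x. affine_map m p C c (F x))"
  by (induction rule: net_fun.induct) (auto simp: affine_map_comp intro: net_fun.intros)

lemma net_fun_pre_affine:
  assumes "net_fun m p W d G"
  shows "net_fun n p W d (\<lambda>x. G (affine_map n m A b x))"
  using assms
proof cases
  case (output_layer C c)
  have "net_fun n p W 0 (\<lambda>x. G (affine_map n m A b x))"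
    by (rule net_fun.output_layer[where A = "\<lambda>i j. \<Sum>k<m. C i k * A k j"
          and b = "\<lambda>i. (\<Sum>k<m. C i k * b k) + c i"])
       (simp add: output_layer affine_map_comp)
  then show ?thesis using output_layer by simp
next
  case (hidden_layer w d' H C c)
  have "net_fun n p W (Suc d') (\<lambda>x. G (affine_map n m A b x))"
    by (rule net_fun.hidden_layer[OF hidden_layer(2,3)]) (simp add: hidden_layer affine_map_comp)
  then show ?thesis using hidden_layer by simp
qed

lemma net_fun_comp:
  "net_fun n m W d1 F \<Longrightarrow> net_fun m p W d2 G \<Longrightarrow> net_fun n p W (d1 + d2) (\<lambda>x. G (F x))"
proof (induction arbitrary: G rule: net_fun.induct)
  case (output_layer n F m A b W)
  show ?case
    using net_fun_pre_affine[OF output_layer.prems, of n A b] by (rule net_fun_weaken) (simp_all add: output_layer.hyps)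
next
  case (hidden_layer w W m d H n F A b)
  have "net_fun w p W (d + d2) (\<lambda>x. G (H x))"
    by (rule hidden_layer.IH[OF hidden_layer.prems])
  from net_fun.hidden_layer[OF hidden_layer.hyps(1) this, of n _ A b]
  show ?case by (simp add: hidden_layer.hyps(3))
qed

lemma net_fun_parallel:
  "net_fun n m1 W1 d F1 \<Longrightarrow> net_fun n m2 W2 d F2 \<Longrightarrow>
   net_fun n (m1 + m2) (W1 + W2) d (\<lambda>x. F1 x @ F2 x)"
proof (induction d arbitrary: n F1 F2)
  case 0
  from 0(1) obtain A1 b1 where F1: "\<And>x. length x = n \<Longrightarrow> F1 x = affine_map n m1 A1 b1 x"
    by (cases rule: net_fun.cases) auto
  from 0(2) obtain A2 b2 where F2: "\<And>x. length x = n \<Longrightarrow> F2 x = affine_map n m2 A2 b2 x"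
    by (cases rule: net_fun.cases) auto
  show ?case by (rule net_fun.output_layer) (simp add: F1 F2 affine_map_append)
next
  case (Suc d)
  from Suc.prems(1) obtain w1 G1 A1 b1 where
    G1: "w1 \<le> W1" "net_fun w1 m1 W1 d G1"
    and F1: "\<And>x. length x = n \<Longrightarrow> F1 x = G1 (map relu (affine_map n w1 A1 b1 x))"
    by (cases rule: net_fun.cases) auto
  from Suc.prems(2) obtain w2 G2 A2 b2 where
    G2: "w2 \<le> W2" "net_fun w2 m2 W2 d G2"
    and F2: "\<And>x. length x = n \<Longrightarrow> F2 x = G2 (map relu (affine_map n w2 A2 b2 x))"
    by (cases rule: net_fun.cases) auto
  \<comment> \<open>the two hidden layers are stacked; each half of the next network reads its own block\<close>
  have "net_fun (w1 + w2) m1 W1 d (\<lambda>h. G1 (take w1 h))"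
    using net_fun_pre_affine[OF G1(2)] by (rule net_fun_cong) (simp add: take_eq_affine_map)
  moreover have "net_fun (w1 + w2) m2 W2 d (\<lambda>h. G2 (drop w1 h))"
    using net_fun_pre_affine[OF G2(2)] by (rule net_fun_cong) (simp add: drop_eq_affine_map)
  ultimately have "net_fun (w1 + w2) (m1 + m2) (W1 + W2) d (\<lambda>h. G1 (take w1 h) @ G2 (drop w1 h))"
    by (rule Suc.IH)
  then show ?case
    using G1(1) G2(1)
    by (intro net_fun.hidden_layer[where A = "\<lambda>i. if i < w1 then A1 i else A2 (i - w1)"
          and b = "\<lambda>i. if i < w1 then b1 i else b2 (i - w1)"])
       (auto simp: F1 F2 affine_map_append[symmetric])
qed

lemma net_fun_one_layer:
  assumes "layer_dims T1 n w" "layer_dims T2 w m" "w \<le> W"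
  shows "net_fun n m W (Suc 0) (\<lambda>x. affine T2 (map relu (affine T1 x)))"
proof (rule net_fun.hidden_layer[OF assms(3) net_fun.output_layer])
  fix x :: "real list"
  assume "length x = w"
  then show "affine T2 x = affine_map w m (\<lambda>i j. fst T2 ! i ! j) (\<lambda>i. snd T2 ! i) x"
    using affine_eq_affine_map[OF assms(2)] by simp
next
  fix x :: "real list"
  assume "length x = n"
  then show "affine T2 (map relu (affine T1 x)) =
      affine T2 (map relu (affine_map n w (\<lambda>i j. fst T1 ! i ! j) (\<lambda>i. snd T1 ! i) x))"
    using affine_eq_affine_map[OF assms(1)] by simp
qed

lemma eval_net_Cons: "Ts \<noteq> [] \<Longrightarrow> eval_net (T # Ts) x = eval_net Ts (map relu (affine T x))"
  by (cases Ts) auto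

lemma net_fun_imp_network:
  assumes "net_fun n m W d F"
  obtains net ds where "length net = Suc d" "length ds = Suc (Suc d)" "ds ! 0 = n" "ds ! Suc d = m"
    "\<And>i. i \<le> d \<Longrightarrow> layer_dims (net ! i) (ds ! i) (ds ! Suc i)"
    "\<And>i. 1 \<le> i \<Longrightarrow> i \<le> d \<Longrightarrow> ds ! i \<le> W"
    "\<And>x. length x = n \<Longrightarrow> eval_net net x = F x"
  using assms
proof (induction arbitrary: thesis rule: net_fun.induct)
  case (output_layer n F m A b W)
  show ?case
    by (rule output_layer.prems[of "[layer_of n m A b]" "[n, m]"])
       (simp_all add: layer_dims_layer_of affine_layer_of output_layer.hyps)
next
  case (hidden_layer w W m d G n F A b)
  obtain net ds where net: "length net = Suc d" "length ds = Suc (Suc d)" "ds ! 0 = w" "ds ! Suc d = m"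
    "\<And>i. i \<le> d \<Longrightarrow> layer_dims (net ! i) (ds ! i) (ds ! Suc i)"
    "\<And>i. 1 \<le> i \<Longrightarrow> i \<le> d \<Longrightarrow> ds ! i \<le> W"
    "\<And>x. length x = w \<Longrightarrow> eval_net net x = G x"
    using hidden_layer.IH by blast
  show ?case
  proof (rule hidden_layer.prems[of "layer_of n w A b # net" "n # ds"])
    fix i assume "i \<le> Suc d"
    then show "layer_dims ((layer_of n w A b # net) ! i) ((n # ds) ! i) ((n # ds) ! Suc i)"
      using net(3,5) by (cases i) (auto simp: layer_dims_layer_of)
  next
    fix i assume "1 \<le> i" "i \<le> Suc d"
    then show "(n # ds) ! i \<le> W"
      using net(3,6) hidden_layer.hyps(1) by (cases i; cases "i - 1") auto
  next
    fix x :: "real list" assume x: "length x = n"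
    have "eval_net (layer_of n w A b # net) x = eval_net net (map relu (affine_map n w A b x))"
      using net(1) x by (subst eval_net_Cons) (auto simp: affine_layer_of)
    also have "\<dots> = F x"
      by (simp add: net(7) hidden_layer.hyps(3)[OF x])
    finally show "eval_net (layer_of n w A b # net) x = F x" .
  qed (use net in auto)
qed

lemma net_fun_in_NN:
  assumes "net_fun 1 1 W d F" "d \<le> L"
  shows "(\<lambda>t. hd (F [t])) \<in> NN W L"
proof -
  obtain net ds where net: "length net = Suc d" "length ds = Suc (Suc d)" "ds ! 0 = 1" "ds ! Suc d = 1"
    "\<And>i. i \<le> d \<Longrightarrow> layer_dims (net ! i) (ds ! i) (ds ! Suc i)"
    "\<And>i. 1 \<le> i \<Longrightarrow> i \<le> d \<Longrightarrow> ds ! i \<le> W"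
    "\<And>x. length x = 1 \<Longrightarrow> eval_net net x = F x"
    using net_fun_imp_network[OF assms(1)] by blast
  show ?thesis
    unfolding NN_def using net assms(2) by (intro CollectI exI[of _ net] exI[of _ ds]) auto
qed

lemma zero_in_NN: "(\<lambda>_. 0) \<in> NN W L"
  using net_fun_in_NN[OF net_fun_affine_map[of 1 1 W "\<lambda>_ _. 0" "\<lambda>_. 0"]]
  by (simp add: affine_map_def)

lemma relu_eq_self: "0 \<le> x \<Longrightarrow> relu x = x"
  by (simp add: relu_def)

lemma relu_eq_0: "x \<le> 0 \<Longrightarrow> relu x = 0"
  by (simp add: relu_def)

lemma relu_minus_relu_uminus: "relu x - relu (- x) = x"
  by (simp add: relu_def)

lemma relu_mult_nonneg: "0 \<le> c \<Longrightarrow> relu (c * x) = c * relu x"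
  by (simp add: relu_def max_mult_distrib_left)

lemma sum_lessThan_add: "(\<Sum>i<a + b::nat. f i) = (\<Sum>i<a. f i) + (\<Sum>i<b. f (a + i))"
  by (induction b) (simp_all add: add.assoc)

lemma sum_lessThan_mult: "(\<Sum>j<a * J::nat. f j) = (\<Sum>g<J. \<Sum>e<a. f (a * g + e))"
proof (induction J)
  case (Suc J)
  have "(\<Sum>j<a * J + a. f j) = (\<Sum>g<Suc J. \<Sum>e<a. f (a * g + e))"
    by (simp add: sum_lessThan_add Suc.IH)
  then show ?case by (simp add: add.commute)
qed simp

lemma sum_four: "(\<Sum>e<4::nat. f e) = f 0 + f 1 + f 2 + (f 3 :: 'a :: comm_monoid_add)"
  by (simp add: eval_nat_numeral)

lemma net_fun_identity: "net_fun n n (2 * n) d (\<lambda>x. x)"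
proof (induction d)
  case 0
  show ?case by (rule net_fun.output_layer[where A = "\<lambda>i j. of_bool (i = j)" and b = "\<lambda>_. 0"])
                (rule nth_equalityI, auto)
next
  case (Suc d)
  \<comment> \<open>\<open>x = relu x - relu (- x)\<close> coordinatewise\<close>
  let ?split = "\<lambda>i j. if i < n then of_bool (j = i) else - of_bool (j = i - n) :: real"
  let ?join = "\<lambda>i j. of_bool (j = i) - of_bool (j = i + n) :: real"
  have "net_fun (2 * n) n (2 * n) d (\<lambda>h. affine_map (2 * n) n ?join (\<lambda>_. 0) h)"
    using net_fun_pre_affine[OF Suc.IH] by simp
  then show ?case
  proof (rule net_fun.hidden_layer[OF order_refl _ nth_equalityI])
    fix x :: "real list" and i
    assume "length x = n" "i < length x"
    then show "x ! i = affine_map (2 * n) n ?join (\<lambda>_. 0)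
        (map relu (affine_map n (2 * n) ?split (\<lambda>_. 0) x)) ! i"
      by (simp add: left_diff_distrib sum_subtractf sum_negf relu_minus_relu_uminus)
  qed simp
qed

section \<open>Many hinges in two hidden layers\<close>

lemma sum_eq_single:
  assumes "finite A" "x \<in> A" "\<And>y. y \<in> A \<Longrightarrow> y \<noteq> x \<Longrightarrow> f y = 0"
  shows "sum f A = f x"
  using sum.remove[OF assms(1,2), of f] assms(3) by (simp add: sum.neutral)

lemma relu_sum_disjoint_support:
  fixes c f :: "nat \<Rightarrow> real"
  assumes "\<And>g. g < J \<Longrightarrow> 0 \<le> c g"
    and "\<And>g1 g2. g1 < J \<Longrightarrow> g2 < J \<Longrightarrow> f g1 \<noteq> 0 \<Longrightarrow> f g2 \<noteq> 0 \<Longrightarrow> g1 = g2"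
  shows "relu (\<Sum>g<J. c g * f g) = (\<Sum>g<J. c g * relu (f g))"
proof (cases "\<exists>g0<J. f g0 \<noteq> 0")
  case True
  then obtain g0 where g0: "g0 < J" "f g0 \<noteq> 0" by blast
  then have "f g = 0" if "g < J" "g \<noteq> g0" for g
    using assms(2) that by blast
  then have "(\<Sum>g<J. c g * f g) = c g0 * f g0" "(\<Sum>g<J. c g * relu (f g)) = c g0 * relu (f g0)"
    using g0 by (auto simp: relu_def intro!: sum_eq_single)
  then show ?thesis using assms(1) g0 by (simp add: relu_mult_nonneg)
next
  case False
  then show ?thesis by (simp add: relu_def)
qed

text \<open>\<open>\<Psi>\<close> is nonpositive on \<open>[a, g]\<close>, equals \<open>t - c\<close> on \<open>[g, e]\<close> and falls linearly to \<open>0\<close> on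
  \<open>[e, h]\<close>: its positive part is the hinge at \<open>c\<close>, bent down beyond \<open>e\<close>.\<close>

lemma four_hinge_bump:
  fixes a g c e h \<sigma> \<mu> t :: real
  assumes "a < g" "g \<le> c" "c \<le> e" "e < h"
    and \<sigma>: "\<sigma> * (g - a) = g - c" and \<mu>: "\<mu> * (h - e) = e - c"
  defines "\<Psi> \<equiv> \<sigma> * relu (t - a) + (1 - \<sigma>) * relu (t - g) - (1 + \<mu>) * relu (t - e) + \<mu> * relu (t - h)"
  shows "relu \<Psi> = relu (t - c) - (1 + \<mu>) * relu (t - e) + \<mu> * relu (t - h)"
    and "t \<le> a \<or> h \<le> t \<Longrightarrow> \<Psi> = 0"
proof -
  have "\<sigma> * (g - a) \<le> 0" "0 < g - a"
    using \<sigma> assms(1,2) by simp_all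
  then have "\<sigma> \<le> 0"
    by (simp add: mult_le_0_iff)
  have "0 \<le> \<mu> * (h - e)" "0 < h - e"
    using \<mu> assms(3,4) by simp_all
  then have "0 \<le> \<mu>"
    by (simp add: zero_le_mult_iff)
  consider "t \<le> a" | "a \<le> t" "t \<le> g" | "g \<le> t" "t \<le> e" | "e \<le> t" "t < h" | "h \<le> t"
    by linarith
  then have "relu \<Psi> = relu (t - c) - (1 + \<mu>) * relu (t - e) + \<mu> * relu (t - h) \<and>
    (t \<le> a \<or> h \<le> t \<longrightarrow> \<Psi> = 0)"
  proof cases
    case 1
    then show ?thesis using assms(1-4) by (simp add: \<Psi>_def relu_eq_0)
  next
    case 2
    then have "\<Psi> = \<sigma> * (t - a)" using assms(1-4) by (simp add: \<Psi>_def relu_eq_0 relu_eq_self)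
    moreover have "\<sigma> * (t - a) \<le> 0" using \<open>\<sigma> \<le> 0\<close> 2 by (simp add: mult_nonpos_nonneg)
    ultimately show ?thesis using 2 assms(1-4) by (simp add: relu_eq_0)
  next
    case 3
    then have "\<Psi> = t - c" using assms(1-4) \<sigma> by (simp add: \<Psi>_def relu_eq_0 relu_eq_self algebra_simps)
    then show ?thesis using 3 assms(1-4) by (auto simp: relu_eq_0 relu_def)
  next
    case 4
    then have "\<Psi> = \<mu> * (h - t)" using assms(1-4) \<sigma> \<mu> by (simp add: \<Psi>_def relu_eq_0 relu_eq_self algebra_simps)
    moreover have "0 \<le> \<mu> * (h - t)" using \<open>0 \<le> \<mu>\<close> 4 by simp
    ultimately show ?thesis using 4 assms(1-4) \<mu> by (simp add: relu_eq_0 relu_eq_self algebra_simps)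
  next
    case 5
    then have "\<Psi> = 0" using assms(1-4) \<sigma> \<mu> by (simp add: \<Psi>_def relu_eq_self algebra_simps)
    then show ?thesis using 5 assms(1-4) \<mu> by (simp add: relu_eq_0 relu_eq_self algebra_simps)
  qed
  then show "relu \<Psi> = relu (t - c) - (1 + \<mu>) * relu (t - e) + \<mu> * relu (t - h)"
    and "t \<le> a \<or> h \<le> t \<Longrightarrow> \<Psi> = 0" by auto
qed

locale hinge_knots =
  fixes \<tau> :: "nat \<Rightarrow> real" and K :: nat
  assumes tau_gap: "\<And>q. \<tau> q + 1/2 \<le> \<tau> (Suc q)" and K_pos: "1 \<le> K"
begin

lemma tau_mono: "i \<le> j \<Longrightarrow> \<tau> i \<le> \<tau> j"
proof (rule lift_Suc_mono_le[of \<tau>])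
  show "\<tau> n \<le> \<tau> (Suc n)" for n
    using tau_gap[of n] by linarith
qed

lemma tau_less: "i < j \<Longrightarrow> \<tau> i + 1/2 \<le> \<tau> j"
  using tau_gap[of i] tau_mono[of "Suc i" j] by simp

text \<open>The knots are split into groups of \<open>K\<close>; the bumps of group \<open>G\<close> are supported in
  \<open>(window G, window (Suc G))\<close>, so bumps of different groups never overlap.\<close>

definition window :: "nat \<Rightarrow> real" where
  "window G = \<tau> (G * K) - 1/4"

definition knot :: "nat \<Rightarrow> nat \<Rightarrow> real" where
  "knot G k = \<tau> (G * K + k)"

definition breakpoints :: "nat \<Rightarrow> real list" where
  "breakpoints G = [window G, knot G 0, knot G (K - 1), window (Suc G)]"

definition bump_tail :: "nat \<Rightarrow> nat \<Rightarrow> real" where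
  "bump_tail G k = (knot G (K - 1) - knot G k) / (window (Suc G) - knot G (K - 1))"

definition bump_coeffs :: "nat \<Rightarrow> nat \<Rightarrow> real list" where
  "bump_coeffs G k =
     [4 * (knot G 0 - knot G k), 1 - 4 * (knot G 0 - knot G k), - (1 + bump_tail G k), bump_tail G k]"

definition bump :: "nat \<Rightarrow> nat \<Rightarrow> real \<Rightarrow> real" where
  "bump G k t = (\<Sum>e<4. bump_coeffs G k ! e * relu (t - breakpoints G ! e))"

lemma window_mono: "G \<le> G' \<Longrightarrow> window G \<le> window G'"
  unfolding window_def by (simp add: tau_mono)

lemma last_knot_before_window: "knot G (K - 1) + 1/4 \<le> window (Suc G)"
proof -
  have "G * K + (K - 1) < Suc G * K"
    using K_pos by simp
  from tau_less[OF this] show ?thesis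
    by (simp add: knot_def window_def)
qed

lemma bump_shape:
  assumes "k < K"
  shows "relu (bump G k t) = relu (t - knot G k) - (1 + bump_tail G k) * relu (t - knot G (K - 1))
           + bump_tail G k * relu (t - window (Suc G))"
    and "t \<le> window G \<or> window (Suc G) \<le> t \<Longrightarrow> bump G k t = 0"
proof -
  have "window G < knot G 0" "knot G 0 \<le> knot G k" "knot G k \<le> knot G (K - 1)"
    using assms by (simp_all add: window_def knot_def tau_mono)
  moreover have "knot G (K - 1) < window (Suc G)"
    using last_knot_before_window[of G] by simp
  moreover have "4 * (knot G 0 - knot G k) * (knot G 0 - window G) = knot G 0 - knot G k"
    by (simp add: window_def knot_def)
  moreover have "bump_tail G k * (window (Suc G) - knot G (K - 1)) = knot G (K - 1) - knot G k"
    using \<open>knot G (K - 1) < window (Suc G)\<close> by (simp add: bump_tail_def)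
  moreover have "bump G k t = 4 * (knot G 0 - knot G k) * relu (t - window G)
      + (1 - 4 * (knot G 0 - knot G k)) * relu (t - knot G 0)
      - (1 + bump_tail G k) * relu (t - knot G (K - 1)) + bump_tail G k * relu (t - window (Suc G))"
    by (simp add: bump_def sum_four bump_coeffs_def breakpoints_def algebra_simps)
  ultimately show "relu (bump G k t) = relu (t - knot G k) - (1 + bump_tail G k) * relu (t - knot G (K - 1))
           + bump_tail G k * relu (t - window (Suc G))"
    and "t \<le> window G \<or> window (Suc G) \<le> t \<Longrightarrow> bump G k t = 0"
    by (simp_all only: four_hinge_bump)
qed

lemma bump_disjoint:
  assumes "k < K" "bump G1 k t \<noteq> 0" "bump G2 k t \<noteq> 0"
  shows "G1 = G2"
proof -
  have "window G1 < t" "t < window (Suc G1)" "window G2 < t" "t < window (Suc G2)"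
    using bump_shape(2)[OF assms(1), of t] assms(2,3) by force+
  then show ?thesis
    using window_mono[of "Suc G1" G2] window_mono[of "Suc G2" G1] by (cases "G1 < G2"; cases "G2 < G1") auto
qed

definition tail_coeffs :: "(nat \<Rightarrow> real) \<Rightarrow> nat \<Rightarrow> real list" where
  "tail_coeffs \<alpha> G = [0, 0, \<Sum>k<K. \<alpha> (G * K + k) * (1 + bump_tail G k),
     - (\<Sum>k<K. \<alpha> (G * K + k) * bump_tail G k)]"

lemma tail_eq:
  "(\<Sum>e<4. tail_coeffs \<alpha> G ! e * relu (t - breakpoints G ! e)) =
   (\<Sum>k<K. \<alpha> (G * K + k) * ((1 + bump_tail G k) * relu (t - knot G (K - 1))
      - bump_tail G k * relu (t - window (Suc G))))"
  by (simp add: sum_four tail_coeffs_def breakpoints_def sum_distrib_right sum_subtractf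
      right_diff_distrib sum_negf mult.assoc)

text \<open>The second hidden layer has \<open>2K + 2\<close> neurons: for each \<open>k < K\<close> the positive and the
  negative part of \<open>\<Sum>g. \<alpha> ((G0 + g) * K + k) * bump (G0 + g) k\<close>, whose ReLU splits over \<open>g\<close>
  because the bumps have disjoint supports, and the sum \<open>T\<close> of all tails, passed on as
  \<open>relu T - relu (- T)\<close>.\<close>

definition hidden_weight :: "nat \<Rightarrow> (nat \<Rightarrow> real) \<Rightarrow> nat \<Rightarrow> nat \<Rightarrow> nat \<Rightarrow> real" where
  "hidden_weight G0 \<alpha> i g e =
     (let G = G0 + g in
      if i < K then max (\<alpha> (G * K + i)) 0 * bump_coeffs G i ! e
      else if i < 2 * K then max (- \<alpha> (G * K + (i - K))) 0 * bump_coeffs G (i - K) ! e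
      else if i = 2 * K then tail_coeffs \<alpha> G ! e
      else - tail_coeffs \<alpha> G ! e)"

definition output_weight :: "nat \<Rightarrow> real" where
  "output_weight i = (if i < K \<or> i = 2 * K then 1 else -1)"

definition hinge_net :: "nat \<Rightarrow> nat \<Rightarrow> (nat \<Rightarrow> real) \<Rightarrow> real list \<Rightarrow> real list" where
  "hinge_net G0 J \<alpha> x =
     affine_map (2 * K + 2) 1 (\<lambda>_. output_weight) (\<lambda>_. 0)
       (map relu (affine_map (4 * J) (2 * K + 2) (\<lambda>i j. hidden_weight G0 \<alpha> i (j div 4) (j mod 4)) (\<lambda>_. 0)
         (map relu (affine_map 1 (4 * J) (\<lambda>_ _. 1) (\<lambda>j. - breakpoints (G0 + j div 4) ! (j mod 4)) x))))"

lemma net_fun_hinge_net: "net_fun 1 1 (max (4 * J) (2 * K + 2)) 2 (hinge_net G0 J \<alpha>)"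
  unfolding hinge_net_def[abs_def] numeral_2_eq_2
  by (intro net_fun_hidden_affine net_fun_affine_map) auto

definition hidden_input :: "nat \<Rightarrow> nat \<Rightarrow> (nat \<Rightarrow> real) \<Rightarrow> nat \<Rightarrow> real \<Rightarrow> real" where
  "hidden_input G0 J \<alpha> i t =
     (\<Sum>g<J. \<Sum>e<4. hidden_weight G0 \<alpha> i g e * relu (t - breakpoints (G0 + g) ! e))"

lemma hinge_net_eq_hidden_input:
  "hinge_net G0 J \<alpha> [t] = [\<Sum>i<2 * K + 2. output_weight i * relu (hidden_input G0 J \<alpha> i t)]"
proof -
  define h where "h = map relu (affine_map 1 (4 * J) (\<lambda>_ _. 1) (\<lambda>j. - breakpoints (G0 + j div 4) ! (j mod 4)) [t])"
  have "(\<Sum>j<4 * J. hidden_weight G0 \<alpha> i (j div 4) (j mod 4) * h ! j) = hidden_input G0 J \<alpha> i t" for i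
    unfolding sum_lessThan_mult hidden_input_def
    by (intro sum.cong refl) (simp add: h_def)
  then show ?thesis
    unfolding hinge_net_def h_def[symmetric] by (intro nth_equalityI) (simp_all add: h_def)
qed

lemma hidden_input_pos:
  "k < K \<Longrightarrow> hidden_input G0 J \<alpha> k t = (\<Sum>g<J. max (\<alpha> ((G0 + g) * K + k)) 0 * bump (G0 + g) k t)"
  unfolding hidden_input_def bump_def by (simp add: hidden_weight_def Let_def sum_distrib_left mult.assoc)

lemma hidden_input_neg:
  "k < K \<Longrightarrow> hidden_input G0 J \<alpha> (K + k) t = (\<Sum>g<J. max (- \<alpha> ((G0 + g) * K + k)) 0 * bump (G0 + g) k t)"
  unfolding hidden_input_def bump_def by (simp add: hidden_weight_def Let_def sum_distrib_left mult.assoc)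

lemma hidden_input_tail:
  fixes G0 J :: nat and \<alpha> :: "nat \<Rightarrow> real" and t :: real
  defines "T \<equiv> \<Sum>g<J. \<Sum>e<4. tail_coeffs \<alpha> (G0 + g) ! e * relu (t - breakpoints (G0 + g) ! e)"
  shows "hidden_input G0 J \<alpha> (2 * K) t = T" and "hidden_input G0 J \<alpha> (Suc (2 * K)) t = - T"
  using K_pos by (simp_all add: hidden_input_def hidden_weight_def T_def sum_negf)

lemma relu_hidden_input_pos:
  "k < K \<Longrightarrow> relu (hidden_input G0 J \<alpha> k t) = (\<Sum>g<J. max (\<alpha> ((G0 + g) * K + k)) 0 * relu (bump (G0 + g) k t))"
  unfolding hidden_input_pos by (rule relu_sum_disjoint_support) (simp_all, metis add_left_cancel bump_disjoint)

lemma relu_hidden_input_neg: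
  "k < K \<Longrightarrow> relu (hidden_input G0 J \<alpha> (K + k) t) = (\<Sum>g<J. max (- \<alpha> ((G0 + g) * K + k)) 0 * relu (bump (G0 + g) k t))"
  unfolding hidden_input_neg by (rule relu_sum_disjoint_support) (simp_all, metis add_left_cancel bump_disjoint)

lemma sum_output_weight:
  "(\<Sum>i<2 * K + 2. output_weight i * f i) = (\<Sum>k<K. f k - f (K + k)) + f (2 * K) - f (Suc (2 * K))"
proof -
  have "(\<Sum>i<K + (K + 2). output_weight i * f i) = (\<Sum>k<K. f k) + (\<Sum>k<K. - f (K + k)) + (f (2 * K) - f (Suc (2 * K)))"
    by (simp add: sum_lessThan_add output_weight_def numeral_2_eq_2 mult_2 add.assoc)
  then show ?thesis
    by (simp add: mult_2 add.assoc sum_subtractf sum_negf)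
qed

lemma hinge_net_eq:
  assumes "length x = 1"
  shows "hinge_net G0 J \<alpha> x = [\<Sum>g<J. \<Sum>k<K. \<alpha> ((G0 + g) * K + k) * relu (x ! 0 - \<tau> ((G0 + g) * K + k))]"
proof -
  define t where "t = x ! 0"
  have x: "x = [t]"
    using assms by (cases x) (simp_all add: t_def)
  let ?a = "\<lambda>g k. \<alpha> ((G0 + g) * K + k)"
  let ?tail = "\<lambda>g k. (1 + bump_tail (G0 + g) k) * relu (t - knot (G0 + g) (K - 1))
      - bump_tail (G0 + g) k * relu (t - window (Suc (G0 + g)))"
  have pos_neg: "relu (hidden_input G0 J \<alpha> k t) - relu (hidden_input G0 J \<alpha> (K + k) t) =
      (\<Sum>g<J. ?a g k * relu (bump (G0 + g) k t))" if "k < K" for k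
    unfolding relu_hidden_input_pos[OF that] relu_hidden_input_neg[OF that] sum_subtractf[symmetric]
    by (intro sum.cong refl) (simp add: max_def algebra_simps)
  have tail: "relu (hidden_input G0 J \<alpha> (2 * K) t) - relu (hidden_input G0 J \<alpha> (Suc (2 * K)) t) =
      (\<Sum>g<J. \<Sum>k<K. ?a g k * ?tail g k)"
    unfolding hidden_input_tail relu_minus_relu_uminus tail_eq by (simp add: algebra_simps)
  have "(\<Sum>i<2 * K + 2. output_weight i * relu (hidden_input G0 J \<alpha> i t)) =
      (\<Sum>k<K. relu (hidden_input G0 J \<alpha> k t) - relu (hidden_input G0 J \<alpha> (K + k) t)) +
      (relu (hidden_input G0 J \<alpha> (2 * K) t) - relu (hidden_input G0 J \<alpha> (Suc (2 * K)) t))"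
    using sum_output_weight[of "\<lambda>i. relu (hidden_input G0 J \<alpha> i t)"] by simp
  also have "\<dots> = (\<Sum>k<K. \<Sum>g<J. ?a g k * relu (bump (G0 + g) k t)) + (\<Sum>g<J. \<Sum>k<K. ?a g k * ?tail g k)"
    by (simp add: pos_neg tail)
  also have "\<dots> = (\<Sum>g<J. \<Sum>k<K. ?a g k * (relu (bump (G0 + g) k t) + ?tail g k))"
    by (simp add: sum.swap[of _ "{..<K}"] sum.distrib[symmetric] distrib_left)
  also have "\<dots> = (\<Sum>g<J. \<Sum>k<K. ?a g k * relu (t - \<tau> ((G0 + g) * K + k)))"
    by (intro sum.cong refl) (simp add: bump_shape(1) knot_def)
  finally show ?thesis
    by (simp add: x hinge_net_eq_hidden_input)
qed

lemma net_fun_hinge_block: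
  "net_fun 2 2 (max (4 * J) (2 * K + 2) + 4) 2
     (\<lambda>x. [x ! 0, x ! 1 + (\<Sum>g<J. \<Sum>k<K. \<alpha> ((G0 + g) * K + k) * relu (x ! 0 - \<tau> ((G0 + g) * K + k)))])"
proof -
  have hinge: "net_fun 2 1 (max (4 * J) (2 * K + 2)) 2
      (\<lambda>x. hinge_net G0 J \<alpha> (affine_map 2 1 (\<lambda>_ j. of_bool (j = 0)) (\<lambda>_. 0) x))"
    by (rule net_fun_pre_affine[OF net_fun_hinge_net])
  from net_fun_post_affine[OF net_fun_parallel[OF hinge net_fun_identity],
      of 2 "\<lambda>i j. if i = 0 then of_bool (j = 1) else of_bool (j \<noteq> 1)" "\<lambda>_. 0"]
  show ?thesis
    by (rule net_fun_weaken)
       (auto intro!: nth_equalityI simp: less_Suc_eq eval_nat_numeral hinge_net_eq)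
qed

text \<open>Each block of \<open>J K\<close> hinges costs two hidden layers; the second coordinate accumulates
  the sum.\<close>

lemma net_fun_hinge_blocks:
  "net_fun 2 2 (max (4 * J) (2 * K + 2) + 4) (2 * C)
     (\<lambda>x. [x ! 0, x ! 1 + (\<Sum>q<K * (J * C). \<alpha> q * relu (x ! 0 - \<tau> q))])"
proof (induction C)
  case 0
  from net_fun_mono[OF net_fun_identity[of 2 0]] show ?case
    by (rule net_fun_weaken) (auto intro!: nth_equalityI simp: less_Suc_eq eval_nat_numeral)
next
  case (Suc C)
  have split: "(\<Sum>q<K * (J * Suc C). f q) =
      (\<Sum>q<K * (J * C). f q) + (\<Sum>g<J. \<Sum>k<K. f ((C * J + g) * K + k))" for f :: "nat \<Rightarrow> real"
  proof -
    have "(\<Sum>q<K * (J * Suc C). f q) = (\<Sum>q<K * (J * C) + K * J. f q)"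
      by (simp add: algebra_simps)
    also have "\<dots> = (\<Sum>q<K * (J * C). f q) + (\<Sum>g<J. \<Sum>k<K. f (K * (J * C) + (K * g + k)))"
      by (simp only: sum_lessThan_add sum_lessThan_mult)
    finally show ?thesis
      by (simp add: algebra_simps)
  qed
  from net_fun_comp[OF Suc.IH net_fun_hinge_block[of J \<alpha> "C * J"]] show ?case
    by (rule net_fun_weaken) (simp_all only: split, simp_all)
qed

lemma net_fun_hinge_sum:
  "net_fun 1 1 (max (4 * J) (2 * K + 2) + 4) (2 * C)
     (\<lambda>x. [a + b * x ! 0 + (\<Sum>q<K * (J * C). \<alpha> q * relu (x ! 0 - \<tau> q))])"
proof -
  have "net_fun 1 1 (max (4 * J) (2 * K + 2) + 4) (2 * C)
     (\<lambda>x. affine_map 2 1 (\<lambda>_ j. of_bool (j = 1)) (\<lambda>_. 0)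
       ((\<lambda>y. [y ! 0, y ! 1 + (\<Sum>q<K * (J * C). \<alpha> q * relu (y ! 0 - \<tau> q))])
         (affine_map 1 2 (\<lambda>i _. if i = 0 then 1 else b) (\<lambda>i. if i = 0 then 0 else a) x)))"
    by (intro net_fun_post_affine net_fun_pre_affine net_fun_hinge_blocks)
  then show ?thesis
    by (rule net_fun_cong) (simp add: affine_map_def eval_nat_numeral)
qed

end

section \<open>Bit extraction with the tent map\<close>

definition tent :: "real \<Rightarrow> real" where
  "tent y = 2 * relu y - 4 * relu (y - 1/2)"

lemma tent_lipschitz: "\<bar>tent x - tent y\<bar> \<le> 2 * \<bar>x - y\<bar>"
  unfolding tent_def relu_def by (auto simp: max_def abs_if)

lemma tent_range: "x \<in> {0..1} \<Longrightarrow> tent x \<in> {0..1}"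
  unfolding tent_def relu_def by (auto simp: max_def)

lemma funpow_tent_lipschitz: "\<bar>(tent ^^ n) x - (tent ^^ n) y\<bar> \<le> 2 ^ n * \<bar>x - y\<bar>"
proof (induction n)
  case (Suc n)
  have "\<bar>(tent ^^ Suc n) x - (tent ^^ Suc n) y\<bar> \<le> 2 * \<bar>(tent ^^ n) x - (tent ^^ n) y\<bar>"
    by (simp add: tent_lipschitz)
  also have "\<dots> \<le> 2 * (2 ^ n * \<bar>x - y\<bar>)"
    using Suc.IH by simp
  finally show ?case by simp
qed simp

lemma funpow_tent_range: "x \<in> {0..1} \<Longrightarrow> (tent ^^ n) x \<in> {0..1}"
  by (induction n) (use tent_range in auto)

text \<open>The two inverse branches of \<open>tent\<close> halve distances, so every point of \<open>[0, 1]\<close> has a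
  \<open>tent ^^ n\<close>-preimage within \<open>2 ^ - n\<close> of any prescribed point.\<close>

lemma funpow_tent_preimage:
  assumes "y \<in> {0..1}" "z \<in> {0..1}"
  shows "\<exists>x \<in> {0..1}. \<bar>x - z\<bar> \<le> 1 / 2 ^ n \<and> (tent ^^ n) x = y"
  using assms(2)
proof (induction n arbitrary: z)
  case 0
  then show ?case using assms(1) by auto
next
  case (Suc n)
  obtain x' where x': "x' \<in> {0..1}" "\<bar>x' - tent z\<bar> \<le> 1 / 2 ^ n" "(tent ^^ n) x' = y"
    using Suc.IH[OF tent_range[OF Suc.prems]] by blast
  define x where "x = (if z \<le> 1/2 then x' / 2 else 1 - x' / 2)"
  have "tent x = x'" "\<bar>x - z\<bar> = \<bar>x' - tent z\<bar> / 2" "x \<in> {0..1}"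
    using x'(1) Suc.prems unfolding x_def tent_def relu_def by (auto simp: max_def abs_if)
  then show ?case
    using x' by (intro bexI[of _ x]) (simp_all add: funpow_Suc_right del: funpow.simps)
qed

lemma funpow_tent_encode:
  assumes "\<And>r. r \<le> k \<Longrightarrow> z r \<in> {0..1}"
  shows "\<exists>x \<in> {0..1}. \<forall>r \<le> k. \<bar>(tent ^^ (r * P)) x - z r\<bar> \<le> 1 / 2 ^ P"
  using assms
proof (induction k arbitrary: z)
  case 0
  then show ?case by (intro bexI[of _ "z 0"]) auto
next
  case (Suc k)
  obtain x' where x': "x' \<in> {0..1}" "\<forall>r \<le> k. \<bar>(tent ^^ (r * P)) x' - z (Suc r)\<bar> \<le> 1 / 2 ^ P"
    using Suc.IH[of "\<lambda>r. z (Suc r)"] Suc.prems by auto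
  obtain x where x: "x \<in> {0..1}" "\<bar>x - z 0\<bar> \<le> 1 / 2 ^ P" "(tent ^^ P) x = x'"
    using funpow_tent_preimage[OF x'(1), of "z 0" P] Suc.prems by auto
  have "\<bar>(tent ^^ (r * P)) x - z r\<bar> \<le> 1 / 2 ^ P" if "r \<le> Suc k" for r
  proof (cases r)
    case (Suc r')
    then have "r * P = r' * P + P" by simp
    then have "(tent ^^ (r * P)) x = (tent ^^ (r' * P)) x'"
      by (simp only: funpow_add comp_def x(3))
    then show ?thesis using x'(2) that Suc by simp
  qed (use x in simp)
  with x(1) show ?case by blast
qed

lemma funpow_tent_encode_blocks:
  assumes "\<And>i. i < N \<Longrightarrow> z i \<in> {0..1}"
  obtains xs where "\<And>m. xs m \<in> {0..1}"
    and "\<And>m \<rho>. \<rho> < R \<Longrightarrow> m * R + \<rho> < N \<Longrightarrow> \<bar>(tent ^^ (\<rho> * P)) (xs m) - z (m * R + \<rho>)\<bar> \<le> 1 / 2 ^ P"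
proof -
  have "\<exists>x \<in> {0..1}. \<forall>\<rho> \<le> R - 1.
      \<bar>(tent ^^ (\<rho> * P)) x - (if m * R + \<rho> < N then z (m * R + \<rho>) else 0)\<bar> \<le> 1 / 2 ^ P" for m
    by (rule funpow_tent_encode) (use assms in auto)
  then have "\<forall>m. \<exists>x. x \<in> {0..1} \<and> (\<forall>\<rho> \<le> R - 1.
      \<bar>(tent ^^ (\<rho> * P)) x - (if m * R + \<rho> < N then z (m * R + \<rho>) else 0)\<bar> \<le> 1 / 2 ^ P)"
    by blast
  then obtain xs where xs: "\<forall>m. xs m \<in> {0..1} \<and> (\<forall>\<rho> \<le> R - 1.
      \<bar>(tent ^^ (\<rho> * P)) (xs m) - (if m * R + \<rho> < N then z (m * R + \<rho>) else 0)\<bar> \<le> 1 / 2 ^ P)"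
    by (metis choice)
  show thesis
  proof (rule that)
    show "xs m \<in> {0..1}" for m
      using xs by blast
    fix m \<rho> assume "\<rho> < R" "m * R + \<rho> < N"
    moreover from \<open>\<rho> < R\<close> xs have
      "\<bar>(tent ^^ (\<rho> * P)) (xs m) - (if m * R + \<rho> < N then z (m * R + \<rho>) else 0)\<bar> \<le> 1 / 2 ^ P"
      by simp
    ultimately show "\<bar>(tent ^^ (\<rho> * P)) (xs m) - z (m * R + \<rho>)\<bar> \<le> 1 / 2 ^ P"
      by simp
  qed
qed

definition tent_select :: "nat \<Rightarrow> nat \<Rightarrow> real \<Rightarrow> real \<Rightarrow> real" where
  "tent_select P k y \<rho> = (\<Sum>r<Suc k. relu ((tent ^^ (r * P)) y - \<bar>\<rho> - real r\<bar>))"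

lemma tent_select_at:
  assumes "y \<in> {0..1}" "\<rho> \<le> k"
  shows "tent_select P k y (real \<rho>) = (tent ^^ (\<rho> * P)) y"
proof -
  have "relu ((tent ^^ (r * P)) y - \<bar>real \<rho> - real r\<bar>) = 0" if "r \<noteq> \<rho>" for r
  proof -
    have "1 \<le> \<bar>real \<rho> - real r\<bar>" using that by (cases "r < \<rho>") auto
    moreover have "(tent ^^ (r * P)) y \<le> 1" using funpow_tent_range[OF assms(1)] by auto
    ultimately show ?thesis by (simp add: relu_eq_0)
  qed
  then have "tent_select P k y (real \<rho>) = relu ((tent ^^ (\<rho> * P)) y)"
    unfolding tent_select_def using assms(2) by (subst sum_eq_single[of _ \<rho>]) auto
  then show ?thesis
    using funpow_tent_range[OF assms(1), of "\<rho> * P"] by (simp add: relu_eq_self)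
qed

lemma relu_lipschitz: "\<bar>relu a - relu b\<bar> \<le> \<bar>a - b\<bar>"
  unfolding relu_def by (auto simp: max_def)

lemma tent_select_lipschitz:
  "\<bar>tent_select P k y \<rho> - tent_select P k y' \<rho>'\<bar>
     \<le> (\<Sum>r<Suc k. 2 ^ (r * P)) * \<bar>y - y'\<bar> + real (Suc k) * \<bar>\<rho> - \<rho>'\<bar>"
proof -
  have "\<bar>tent_select P k y \<rho> - tent_select P k y' \<rho>'\<bar> \<le>
      (\<Sum>r<Suc k. \<bar>relu ((tent ^^ (r * P)) y - \<bar>\<rho> - real r\<bar>) - relu ((tent ^^ (r * P)) y' - \<bar>\<rho>' - real r\<bar>)\<bar>)"
    unfolding tent_select_def sum_subtractf[symmetric] by (rule sum_abs)
  also have "\<dots> \<le> (\<Sum>r<Suc k. 2 ^ (r * P) * \<bar>y - y'\<bar> + \<bar>\<rho> - \<rho>'\<bar>)"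
  proof (rule sum_mono)
    fix r
    have "\<bar>relu ((tent ^^ (r * P)) y - \<bar>\<rho> - real r\<bar>) - relu ((tent ^^ (r * P)) y' - \<bar>\<rho>' - real r\<bar>)\<bar>
        \<le> \<bar>((tent ^^ (r * P)) y - \<bar>\<rho> - real r\<bar>) - ((tent ^^ (r * P)) y' - \<bar>\<rho>' - real r\<bar>)\<bar>"
      by (rule relu_lipschitz)
    also have "\<dots> \<le> \<bar>(tent ^^ (r * P)) y - (tent ^^ (r * P)) y'\<bar> + \<bar>\<rho> - \<rho>'\<bar>"
      by linarith
    finally show "\<bar>relu ((tent ^^ (r * P)) y - \<bar>\<rho> - real r\<bar>) - relu ((tent ^^ (r * P)) y' - \<bar>\<rho>' - real r\<bar>)\<bar>
        \<le> 2 ^ (r * P) * \<bar>y - y'\<bar> + \<bar>\<rho> - \<rho>'\<bar>"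
      using funpow_tent_lipschitz[of "r * P" y y'] by linarith
  qed
  also have "\<dots> = (\<Sum>r<Suc k. 2 ^ (r * P)) * \<bar>y - y'\<bar> + real (Suc k) * \<bar>\<rho> - \<rho>'\<bar>"
    by (simp add: sum.distrib sum_distrib_right del: sum.lessThan_Suc)
  finally show ?thesis .
qed

lemma sum_pow_mult_le: "1 \<le> P \<Longrightarrow> (\<Sum>r<Suc k. (2::real) ^ (r * P)) \<le> 2 * 2 ^ (k * P)"
proof (induction k)
  case (Suc k)
  have "(2::real) * 2 ^ (k * P) \<le> 2 ^ (k * P + P)"
    using power_increasing[of 1 P "2::real"] Suc.prems by (simp add: power_add)
  with Suc show ?case by (simp add: add.commute)
qed simp

definition clamp01 :: "real \<Rightarrow> real" where
  "clamp01 u = max 0 (min 1 u)"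

lemma clamp01_range: "clamp01 u \<in> {0..1}"
  by (simp add: clamp01_def)

lemma clamp01_id: "u \<in> {0..1} \<Longrightarrow> clamp01 u = u"
  by (simp add: clamp01_def)

lemma clamp01_lipschitz: "\<bar>clamp01 a - clamp01 b\<bar> \<le> \<bar>a - b\<bar>"
  by (simp add: clamp01_def max_def min_def)

lemma net_fun_tent_step: "net_fun 3 3 8 1 (\<lambda>x. [tent (x ! 0), x ! 1, x ! 2])"
proof -
  have "net_fun 3 3 8 (Suc 0) (\<lambda>x. affine ([[2, -4, 0, 0, 0, 0], [0, 0, 1, -1, 0, 0], [0, 0, 0, 0, 1, -1]], [0, 0, 0])
     (map relu (affine ([[1, 0, 0], [1, 0, 0], [0, 1, 0], [0, -1, 0], [0, 0, 1], [0, 0, -1]], [0, -1/2, 0, 0, 0, 0]) x)))"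
    by (rule net_fun_one_layer) (auto simp: layer_dims_def)
  then show ?thesis
  proof (rule net_fun_weaken)
    fix x :: "real list" assume "length x = 3"
    then obtain a b c where "x = [a, b, c]" by (auto simp: numeral_3_eq_3 length_Suc_conv)
    then show "affine ([[2, -4, 0, 0, 0, 0], [0, 0, 1, -1, 0, 0], [0, 0, 0, 0, 1, -1]], [0, 0, 0])
     (map relu (affine ([[1, 0, 0], [1, 0, 0], [0, 1, 0], [0, -1, 0], [0, 0, 1], [0, 0, -1]], [0, -1/2, 0, 0, 0, 0]) x))
      = [tent (x ! 0), x ! 1, x ! 2]"
      by (simp add: affine_def eval_nat_numeral tent_def relu_def max_def)
  qed simp_all
qed

lemma net_fun_tent_iter: "net_fun 3 3 8 n (\<lambda>x. [(tent ^^ n) (x ! 0), x ! 1, x ! 2])"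
proof (induction n)
  case 0
  from net_fun_mono[OF net_fun_identity[of 3 0], of 8] show ?case
    by (rule net_fun_weaken) (auto intro!: nth_equalityI simp: eval_nat_numeral less_Suc_eq)
next
  case (Suc n)
  from net_fun_comp[OF Suc.IH net_fun_tent_step] show ?case
    by (rule net_fun_weaken) simp_all
qed

lemma net_fun_select_step:
  "net_fun 3 3 8 2 (\<lambda>x. [x ! 0, x ! 1, x ! 2 + relu (x ! 0 - \<bar>x ! 1 - r\<bar>)])"
proof -
  \<comment> \<open>first \<open>\<bar>x ! 1 - r\<bar>\<close> is appended as a fourth coordinate\<close>
  have dist: "net_fun 3 4 8 (Suc 0) (\<lambda>x. affine ([[1,-1,0,0,0,0,0,0], [0,0,1,-1,0,0,0,0], [0,0,0,0,1,-1,0,0], [0,0,0,0,0,0,1,1]], [0,0,0,0])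
     (map relu (affine ([[1,0,0], [-1,0,0], [0,1,0], [0,-1,0], [0,0,1], [0,0,-1], [0,1,0], [0,-1,0]], [0,0,0,0,0,0,-r,r]) x)))"
    by (rule net_fun_one_layer) (auto simp: layer_dims_def)
  have select: "net_fun 4 3 8 (Suc 0) (\<lambda>x. affine ([[1,-1,0,0,0,0,0], [0,0,1,-1,0,0,0], [0,0,0,0,1,-1,1]], [0,0,0])
     (map relu (affine ([[1,0,0,0], [-1,0,0,0], [0,1,0,0], [0,-1,0,0], [0,0,1,0], [0,0,-1,0], [1,0,0,-1]], [0,0,0,0,0,0,0]) x)))"
    by (rule net_fun_one_layer) (auto simp: layer_dims_def)
  from net_fun_comp[OF dist select] show ?thesis
  proof (rule net_fun_weaken)
    fix x :: "real list" assume "length x = 3"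
    then obtain a b c where "x = [a, b, c]" by (auto simp: numeral_3_eq_3 length_Suc_conv)
    then show "affine ([[1,-1,0,0,0,0,0], [0,0,1,-1,0,0,0], [0,0,0,0,1,-1,1]], [0,0,0])
     (map relu (affine ([[1,0,0,0], [-1,0,0,0], [0,1,0,0], [0,-1,0,0], [0,0,1,0], [0,0,-1,0], [1,0,0,-1]], [0,0,0,0,0,0,0])
      (affine ([[1,-1,0,0,0,0,0,0], [0,0,1,-1,0,0,0,0], [0,0,0,0,1,-1,0,0], [0,0,0,0,0,0,1,1]], [0,0,0,0])
     (map relu (affine ([[1,0,0], [-1,0,0], [0,1,0], [0,-1,0], [0,0,1], [0,0,-1], [0,1,0], [0,-1,0]], [0,0,0,0,0,0,-r,r]) x)))))
      = [x ! 0, x ! 1, x ! 2 + relu (x ! 0 - \<bar>x ! 1 - r\<bar>)]"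
      by (simp add: affine_def eval_nat_numeral relu_minus_relu_uminus) (simp add: relu_def max_def)
  qed simp_all
qed

lemma net_fun_tent_select:
  "net_fun 3 3 8 (2 * Suc k + k * P) (\<lambda>x. [(tent ^^ (k * P)) (x ! 0), x ! 1, x ! 2 + tent_select P k (x ! 0) (x ! 1)])"
proof (induction k)
  case 0
  from net_fun_select_step[of 0] show ?case
    by (rule net_fun_weaken) (simp_all add: tent_select_def)
next
  case (Suc k)
  from net_fun_comp[OF net_fun_comp[OF Suc.IH net_fun_tent_iter[of P]] net_fun_select_step[of "real (Suc k)"]]
  show ?case
    by (rule net_fun_weaken) (simp_all add: tent_select_def funpow_add algebra_simps)
qed

lemma net_fun_clamp01: "net_fun 3 1 8 1 (\<lambda>x. [clamp01 (x ! 2)])"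
proof -
  have "net_fun 3 1 8 (Suc 0) (\<lambda>x. affine ([[1, -1]], [0]) (map relu (affine ([[0, 0, 1], [0, 0, 1]], [0, -1]) x)))"
    by (rule net_fun_one_layer) (auto simp: layer_dims_def)
  then show ?thesis
  proof (rule net_fun_weaken)
    fix x :: "real list" assume "length x = 3"
    then obtain a b c where "x = [a, b, c]" by (auto simp: numeral_3_eq_3 length_Suc_conv)
    then show "affine ([[1, -1]], [0]) (map relu (affine ([[0, 0, 1], [0, 0, 1]], [0, -1]) x)) = [clamp01 (x ! 2)]"
      by (simp add: affine_def eval_nat_numeral relu_def clamp01_def max_def min_def)
  qed simp_all
qed

section \<open>Piecewise linear interpolation over blocks\<close>

definition ramp :: "real \<Rightarrow> real \<Rightarrow> real" where
  "ramp a t = clamp01 (2 * (t - a))"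

lemma ramp_eq_hinges: "ramp a t = 2 * relu (t - a) - 2 * relu (t - (a + 1/2))"
  unfolding ramp_def clamp01_def relu_def by (auto simp: max_def min_def)

lemma ramp_eq_1: "a + 1/2 \<le> t \<Longrightarrow> ramp a t = 1"
  unfolding ramp_def clamp01_def by auto

lemma ramp_eq_0: "t \<le> a \<Longrightarrow> ramp a t = 0"
  unfolding ramp_def clamp01_def by auto

text \<open>\<open>clip s t c\<close> is the projection of \<open>c\<close> onto \<open>[s, t]\<close>; increments of ramps with disjoint
  rising intervals telescope through it.\<close>

definition clip :: "real \<Rightarrow> real \<Rightarrow> real \<Rightarrow> real" where
  "clip s t c = max s (min t c)"

lemma clip_mono: "c \<le> c' \<Longrightarrow> clip s t c \<le> clip s t c'"
  by (simp add: clip_def max_def min_def)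

lemma ramp_increment:
  assumes "s \<le> t"
  shows "0 \<le> ramp a t - ramp a s" and "ramp a t - ramp a s \<le> 2 * (clip s t (a + 1/2) - clip s t a)"
  using assms unfolding ramp_def clamp01_def clip_def by (auto simp: max_def min_def)

text \<open>Ramp \<open>i\<close> rises on \<open>[(i + 1) R - 1/2, (i + 1) R]\<close>, just before block \<open>i + 1\<close> starts, so on
  block \<open>m\<close> exactly the ramps \<open>i < m\<close> are switched on.\<close>

definition ramp_start :: "nat \<Rightarrow> nat \<Rightarrow> real" where
  "ramp_start R i = real (Suc i * R) - 1/2"

definition block_count :: "nat \<Rightarrow> nat \<Rightarrow> real \<Rightarrow> real" where
  "block_count R Nb t = (\<Sum>i<Nb - 1. ramp (ramp_start R i) t)"

definition block_interp :: "nat \<Rightarrow> nat \<Rightarrow> (nat \<Rightarrow> real) \<Rightarrow> real \<Rightarrow> real" where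
  "block_interp R Nb xs t = xs 0 + (\<Sum>i<Nb - 1. (xs (Suc i) - xs i) * ramp (ramp_start R i) t)"

definition block_offset :: "nat \<Rightarrow> nat \<Rightarrow> real \<Rightarrow> real" where
  "block_offset R Nb t = t - real R * block_count R Nb t"

lemma block_count_increment:
  assumes "s \<le> t" "1 \<le> R"
  shows "0 \<le> block_count R Nb t - block_count R Nb s"
    and "block_count R Nb t - block_count R Nb s \<le> 2 * (t - s)"
proof -
  define c where "c i = clip s t (ramp_start R i)" for i
  have diff: "block_count R Nb t - block_count R Nb s = (\<Sum>i<Nb - 1. ramp (ramp_start R i) t - ramp (ramp_start R i) s)"
    unfolding block_count_def by (simp add: sum_subtractf)
  then show "0 \<le> block_count R Nb t - block_count R Nb s"
    using ramp_increment(1)[OF assms(1)] by (simp add: sum_nonneg)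
  have "ramp (ramp_start R i) t - ramp (ramp_start R i) s \<le> 2 * (c (Suc i) - c i)" for i
  proof -
    have "clip s t (ramp_start R i + 1/2) \<le> c (Suc i)"
      unfolding c_def using assms(2) by (intro clip_mono) (simp add: ramp_start_def)
    with ramp_increment(2)[OF assms(1), of "ramp_start R i"] show ?thesis
      by (simp add: c_def)
  qed
  then have "block_count R Nb t - block_count R Nb s \<le> (\<Sum>i<Nb - 1. 2 * (c (Suc i) - c i))"
    unfolding diff by (rule sum_mono)
  also have "\<dots> = 2 * (c (Nb - 1) - c 0)"
    by (simp only: sum_distrib_left[symmetric] sum_lessThan_telescope)
  also have "\<dots> \<le> 2 * (t - s)"
    using assms(1) by (simp add: c_def clip_def)
  finally show "block_count R Nb t - block_count R Nb s \<le> 2 * (t - s)" .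
qed

lemma block_interp_lipschitz:
  assumes "1 \<le> R" "\<And>i. xs i \<in> {0..1}"
  shows "\<bar>block_interp R Nb xs t - block_interp R Nb xs s\<bar> \<le> 2 * \<bar>t - s\<bar>"
proof -
  have step: "\<bar>xs (Suc i) - xs i\<bar> \<le> 1" for i
    using assms(2)[of i] assms(2)[of "Suc i"] by auto
  have "\<bar>block_interp R Nb xs t - block_interp R Nb xs s\<bar> \<le> 2 * (t - s)" if "s \<le> t" for s t
  proof -
    let ?d = "\<lambda>i. ramp (ramp_start R i) t - ramp (ramp_start R i) s"
    have "\<bar>block_interp R Nb xs t - block_interp R Nb xs s\<bar> = \<bar>\<Sum>i<Nb - 1. (xs (Suc i) - xs i) * ?d i\<bar>"
      unfolding block_interp_def by (simp add: sum_subtractf right_diff_distrib)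
    also have "\<dots> \<le> (\<Sum>i<Nb - 1. \<bar>(xs (Suc i) - xs i) * ?d i\<bar>)"
      by (rule sum_abs)
    also have "\<dots> = (\<Sum>i<Nb - 1. \<bar>xs (Suc i) - xs i\<bar> * ?d i)"
      using ramp_increment(1)[OF that] by (simp add: abs_mult)
    also have "\<dots> \<le> (\<Sum>i<Nb - 1. ?d i)"
      using step ramp_increment(1)[OF that] by (intro sum_mono mult_left_le_one_le) auto
    also have "\<dots> = block_count R Nb t - block_count R Nb s"
      unfolding block_count_def by (simp add: sum_subtractf)
    also have "\<dots> \<le> 2 * (t - s)"
      by (rule block_count_increment(2)[OF that assms(1)])
    finally show ?thesis .
  qed
  from this[of s t] this[of t s] show ?thesis
    by (cases "s \<le> t") (auto simp: abs_minus_commute)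
qed

lemma block_offset_lipschitz:
  assumes "1 \<le> R"
  shows "\<bar>block_offset R Nb t - block_offset R Nb s\<bar> \<le> (2 * real R - 1) * \<bar>t - s\<bar>"
proof -
  have "\<bar>block_offset R Nb t - block_offset R Nb s\<bar> \<le> (2 * real R - 1) * (t - s)" if "s \<le> t" for s t
  proof -
    define \<Delta> where "\<Delta> = block_count R Nb t - block_count R Nb s"
    have "0 \<le> real R * \<Delta>" "real R * \<Delta> \<le> real R * (2 * (t - s))"
      using block_count_increment[OF that assms] unfolding \<Delta>_def by (simp_all add: mult_left_mono)
    moreover have "t - s \<le> (2 * real R - 1) * (t - s)"
      using assms that by (simp add: mult_right_mono[of 1 "2 * real R - 1" "t - s", simplified])
    moreover have "block_offset R Nb t - block_offset R Nb s = (t - s) - real R * \<Delta>"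
      unfolding block_offset_def \<Delta>_def by (simp add: algebra_simps)
    ultimately show ?thesis
      by (simp add: abs_le_iff algebra_simps)
  qed
  from this[of s t] this[of t s] show ?thesis
    by (cases "s \<le> t") (auto simp: abs_minus_commute)
qed

lemma sum_ramps_at_block:
  assumes "m \<le> n" "1 \<le> R" "real (m * R) \<le> t" "t \<le> real (m * R + R) - 1"
  shows "(\<Sum>i<n. f i * ramp (ramp_start R i) t) = (\<Sum>i<m. f i)"
proof -
  have ramp_at: "ramp (ramp_start R i) t = (if i < m then 1 else 0)" for i
  proof (cases "i < m")
    case True
    then have "Suc i * R \<le> m * R" by (intro mult_le_mono1) simp
    then have "real (Suc i * R) \<le> real (m * R)" by (simp only: of_nat_le_iff)
    then show ?thesis using True assms(3) by (simp add: ramp_eq_1 ramp_start_def)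
  next
    case False
    then have "Suc m * R \<le> Suc i * R" by (intro mult_le_mono1) simp
    then have "real (m * R + R) \<le> real (Suc i * R)" by (simp only: of_nat_le_iff mult_Suc add.commute)
    then show ?thesis using False assms(4) by (simp add: ramp_eq_0 ramp_start_def)
  qed
  have "(\<Sum>i<n. f i * ramp (ramp_start R i) t) = (\<Sum>i<m + (n - m). if i < m then f i else 0)"
    using assms(1) by (intro sum.cong) (simp_all add: ramp_at)
  then show ?thesis
    by (simp add: sum_lessThan_add)
qed

lemma block_interp_offset_at:
  assumes "m < Nb" "\<rho> < R"
  shows "block_interp R Nb xs (real (m * R + \<rho>)) = xs m"
    and "block_offset R Nb (real (m * R + \<rho>)) = real \<rho>"
proof -
  have "m \<le> Nb - 1" "1 \<le> R" "real (m * R) \<le> real (m * R + \<rho>)" "real (m * R + \<rho>) \<le> real (m * R + R) - 1"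
    using assms by auto
  note at_block = sum_ramps_at_block[OF this]
  show "block_interp R Nb xs (real (m * R + \<rho>)) = xs m"
    unfolding block_interp_def at_block by (simp add: sum_lessThan_telescope)
  show "block_offset R Nb (real (m * R + \<rho>)) = real \<rho>"
    unfolding block_offset_def block_count_def using at_block[of "\<lambda>_. 1"] by simp
qed

definition ramp_knot :: "nat \<Rightarrow> nat \<Rightarrow> real" where
  "ramp_knot R q = real ((q div 2 + 1) * R) - (if even q then 1/2 else 0)"

definition ramp_coeffs :: "nat \<Rightarrow> (nat \<Rightarrow> real) \<Rightarrow> nat \<Rightarrow> real" where
  "ramp_coeffs n c q = (if q < 2 * n then (if even q then 2 else -2) * c (q div 2) else 0)"

lemma ramp_knot_gap: "1 \<le> R \<Longrightarrow> ramp_knot R q + 1/2 \<le> ramp_knot R (Suc q)"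
  unfolding ramp_knot_def by (cases "even q") (auto elim!: evenE oddE simp: algebra_simps)

lemma sum_ramps_eq_hinges:
  assumes "2 * n \<le> M"
  shows "(\<Sum>i<n. c i * ramp (ramp_start R i) t) = (\<Sum>q<M. ramp_coeffs n c q * relu (t - ramp_knot R q))"
proof -
  have "(\<Sum>q<M. ramp_coeffs n c q * relu (t - ramp_knot R q)) =
      (\<Sum>q<2 * n + (M - 2 * n). ramp_coeffs n c q * relu (t - ramp_knot R q))"
    using assms by simp
  also have "\<dots> = (\<Sum>i<n. \<Sum>e<2. ramp_coeffs n c (2 * i + e) * relu (t - ramp_knot R (2 * i + e)))"
    by (simp add: sum_lessThan_add sum_lessThan_mult ramp_coeffs_def)
  also have "\<dots> = (\<Sum>i<n. c i * ramp (ramp_start R i) t)"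
  proof (intro sum.cong refl)
    fix i assume "i \<in> {..<n}"
    then have "2 * i < 2 * n" "Suc (2 * i) < 2 * n" "2 * i div 2 = i" "Suc (2 * i) div 2 = i"
      by auto
    then show "(\<Sum>e<2. ramp_coeffs n c (2 * i + e) * relu (t - ramp_knot R (2 * i + e))) =
        c i * ramp (ramp_start R i) t"
      by (simp add: lessThan_nat_numeral ramp_coeffs_def ramp_knot_def ramp_start_def ramp_eq_hinges
          algebra_simps)
  qed
  finally show ?thesis ..
qed

section \<open>The interpolating network\<close>

text \<open>\<open>bit_net P R Nb xs\<close> reads \<open>Nb\<close> blocks of length \<open>R\<close>; block \<open>m\<close> is encoded by \<open>xs m\<close>, with
  \<open>P\<close> tent iterations between consecutive values.\<close>

definition bit_net :: "nat \<Rightarrow> nat \<Rightarrow> nat \<Rightarrow> (nat \<Rightarrow> real) \<Rightarrow> real \<Rightarrow> real" where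
  "bit_net P R Nb xs t = clamp01 (tent_select P (R - 1) (block_interp R Nb xs t) (block_offset R Nb t))"

lemma bit_net_in_NN:
  assumes "1 \<le> R" "1 \<le> K" "2 * (Nb - 1) \<le> K * (J * C)"
    and "2 * (max (4 * J) (2 * K + 2) + 4) \<le> W" "2 * C + 2 * R + (R - 1) * P + 1 \<le> L"
  shows "bit_net P R Nb xs \<in> NN W L"
proof -
  have "8 \<le> W"
    by (rule order_trans[OF _ assms(4)]) simp
  interpret hinge_knots "ramp_knot R" K
    using assms(1,2) ramp_knot_gap by unfold_locales auto
  from net_fun_parallel[OF
      net_fun_hinge_sum[where J = J and C = C and a = "xs 0" and b = 0 and \<alpha> = "ramp_coeffs (Nb - 1) (\<lambda>i. xs (Suc i) - xs i)"]
      net_fun_hinge_sum[where J = J and C = C and a = 0 and b = 1 and \<alpha> = "ramp_coeffs (Nb - 1) (\<lambda>_. - real R)"]]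
  have interp_offset: "net_fun 1 2 W (2 * C) (\<lambda>x. [block_interp R Nb xs (x ! 0), block_offset R Nb (x ! 0)])"
    using assms(3,4)
    by (elim net_fun_weaken)
       (simp_all add: block_interp_def block_offset_def block_count_def sum_ramps_eq_hinges[symmetric]
         sum_distrib_left sum_negf)
  have "net_fun 2 3 8 (2 * Suc (R - 1) + (R - 1) * P)
      (\<lambda>y. (\<lambda>z. [(tent ^^ ((R - 1) * P)) (z ! 0), z ! 1, z ! 2 + tent_select P (R - 1) (z ! 0) (z ! 1)])
             (affine_map 2 3 (\<lambda>i j. of_bool (i = j \<and> i < 2)) (\<lambda>_. 0) y))"
    by (rule net_fun_pre_affine[OF net_fun_tent_select])
  then have select: "net_fun 2 3 W (2 * R + (R - 1) * P)
      (\<lambda>y. [(tent ^^ ((R - 1) * P)) (y ! 0), y ! 1, tent_select P (R - 1) (y ! 0) (y ! 1)])"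
    using assms(1) \<open>8 \<le> W\<close> by (elim net_fun_weaken) (simp_all add: eval_nat_numeral)
  have "net_fun 1 1 W (2 * C + (2 * R + (R - 1) * P) + 1) (\<lambda>x. [bit_net P R Nb xs (x ! 0)])"
    using net_fun_comp[OF net_fun_comp[OF interp_offset select] net_fun_mono[OF net_fun_clamp01 \<open>8 \<le> W\<close>]]
    by (rule net_fun_cong) (simp add: bit_net_def)
  from net_fun_in_NN[OF this] assms(5) show ?thesis
    by simp
qed

lemma bit_net_at_block:
  assumes "m < Nb" "\<rho> < R" "xs m \<in> {0..1}"
  shows "bit_net P R Nb xs (real (m * R + \<rho>)) = (tent ^^ (\<rho> * P)) (xs m)"
proof -
  have "\<rho> \<le> R - 1"
    using assms(2) by simp
  show ?thesis
    unfolding bit_net_def block_interp_offset_at[OF assms(1,2)] tent_select_at[OF assms(3) \<open>\<rho> \<le> R - 1\<close>]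
    by (rule clamp01_id[OF funpow_tent_range[OF assms(3)]])
qed

lemma bit_net_lipschitz:
  assumes "1 \<le> R" "1 \<le> P" "\<And>m. xs m \<in> {0..1}"
  shows "(4 * 2 ^ ((R - 1) * P) + 2 * real R ^ 2)-lipschitz_on UNIV (bit_net P R Nb xs)"
proof (rule lipschitz_onI)
  fix s t :: real
  define G where "G = (\<Sum>r<Suc (R - 1). (2::real) ^ (r * P))"
  have G: "0 \<le> G" "G \<le> 2 * 2 ^ ((R - 1) * P)"
    unfolding G_def by (simp_all only: sum_nonneg zero_le_power zero_le_numeral sum_pow_mult_le[OF assms(2)])
  have "\<bar>bit_net P R Nb xs t - bit_net P R Nb xs s\<bar> \<le>
      G * \<bar>block_interp R Nb xs t - block_interp R Nb xs s\<bar> + real R * \<bar>block_offset R Nb t - block_offset R Nb s\<bar>"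
    using order_trans[OF clamp01_lipschitz tent_select_lipschitz[of P "R - 1"]] assms(1)
    by (simp add: bit_net_def G_def)
  also have "\<dots> \<le> G * (2 * \<bar>t - s\<bar>) + real R * ((2 * real R - 1) * \<bar>t - s\<bar>)"
    using G(1) assms
    by (intro add_mono mult_left_mono block_interp_lipschitz block_offset_lipschitz) auto
  also have "\<dots> \<le> (4 * 2 ^ ((R - 1) * P) + 2 * real R ^ 2) * \<bar>t - s\<bar>"
  proof -
    have "G * (2 * \<bar>t - s\<bar>) \<le> 4 * 2 ^ ((R - 1) * P) * \<bar>t - s\<bar>"
      using mult_right_mono[OF G(2), of "2 * \<bar>t - s\<bar>"] by simp
    moreover have "real R * ((2 * real R - 1) * \<bar>t - s\<bar>) \<le> 2 * real R ^ 2 * \<bar>t - s\<bar>"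
      by (simp add: power2_eq_square algebra_simps)
    ultimately show ?thesis
      unfolding distrib_right by linarith
  qed
  finally show "dist (bit_net P R Nb xs t) (bit_net P R Nb xs s) \<le> (4 * 2 ^ ((R - 1) * P) + 2 * real R ^ 2) * dist t s"
    by (simp add: dist_real_def)
qed simp

lemma bit_net_interpolates:
  assumes "1 \<le> R" "\<And>i. i < N \<Longrightarrow> z i \<in> {0..1}"
  obtains xs where "\<And>m. xs m \<in> {0..1}"
    and "\<And>i. i < N \<Longrightarrow> \<bar>bit_net P R (N div R + 1) xs (real i) - z i\<bar> \<le> 1 / 2 ^ P"
proof -
  obtain xs where xs: "\<And>m. xs m \<in> {0..1}"
    "\<And>m \<rho>. \<rho> < R \<Longrightarrow> m * R + \<rho> < N \<Longrightarrow> \<bar>(tent ^^ (\<rho> * P)) (xs m) - z (m * R + \<rho>)\<bar> \<le> 1 / 2 ^ P"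
    using funpow_tent_encode_blocks[where N = N and z = z and R = R and P = P, OF assms(2)] by blast
  have "\<bar>bit_net P R (N div R + 1) xs (real i) - z i\<bar> \<le> 1 / 2 ^ P" if "i < N" for i
  proof -
    define m \<rho> where "m = i div R" and "\<rho> = i mod R"
    have block: "m < N div R + 1" "\<rho> < R" and i: "m * R + \<rho> = i"
      using assms(1) \<open>i < N\<close> by (simp_all add: m_def \<rho>_def div_le_mono le_imp_less_Suc)
    have "bit_net P R (N div R + 1) xs (real i) = (tent ^^ (\<rho> * P)) (xs m)"
      using bit_net_at_block[OF block xs(1)] by (simp only: i)
    with xs(2)[OF block(2), of m] show ?thesis
      by (simp add: i that)
  qed
  with xs(1) show thesis by (rule that)
qed


section \<open>Choice of the parameters\<close>

lemma double_le_power2: "1 \<le> n \<Longrightarrow> 2 * n \<le> 2 ^ n"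
proof (induction n rule: dec_induct)
  case (step n)
  then have "2 \<le> (2::nat) ^ n"
    using power_increasing[of 1 n "2::nat"] by simp
  with step.IH show ?case by simp
qed simp

lemma ceiling_log2_bounds:
  fixes n :: nat
  assumes "1 \<le> n"
  defines "c \<equiv> nat \<lceil>log 2 (2 * real n)\<rceil>"
  shows "2 * n \<le> 2 ^ c" and "c \<le> n" and "2 \<le> n \<Longrightarrow> 2 \<le> c"
proof -
  have "1 \<le> log 2 (2 * real n)"
    using assms(1) by (subst le_log_iff) auto
  then have c: "real c = real_of_int \<lceil>log 2 (2 * real n)\<rceil>"
    unfolding c_def by linarith
  have "2 * real n = 2 powr (log 2 (2 * real n))"
    using assms(1) by simp
  also have "\<dots> \<le> 2 powr real c"
    unfolding c by (intro powr_mono) auto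
  finally have "real (2 * n) \<le> real (2 ^ c)"
    by (simp add: powr_realpow)
  then show "2 * n \<le> 2 ^ c"
    by (simp only: of_nat_le_iff)
  have "real (2 * n) \<le> real (2 ^ n)"
    using double_le_power2[OF assms(1)] by (simp only: of_nat_le_iff)
  then have "2 * real n \<le> 2 powr real n"
    by (simp add: powr_realpow)
  then have "log 2 (2 * real n) \<le> real n"
    using assms(1) by (subst log_le_iff) auto
  then show "c \<le> n"
    unfolding c_def by linarith
  assume "2 \<le> n"
  then have "2 \<le> log 2 (2 * real n)"
    by (subst le_log_iff) auto
  then show "2 \<le> c"
    unfolding c_def by linarith
qed

lemma add_le_square_mult:
  fixes a b :: nat
  assumes "1 \<le> a" "2 \<le> b"
  shows "a + b \<le> (a * b) * (a * b)"
proof -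
  have "a + b \<le> a * b + a * b"
    using assms by (intro add_mono) simp_all
  also have "\<dots> \<le> (a * b) * (a * b)"
    using assms mult_le_mono[of 1 a 2 b] by (simp add: mult_2[symmetric])
  finally show ?thesis .
qed

lemma hinge_capacity:
  fixes W L s cW cL :: nat
  assumes "1 \<le> s" "1 \<le> cW" "2 \<le> cL" "1 \<le> W" "1 \<le> L"
  defines "A \<equiv> s * (2 * W + 1) * cW" and "P \<equiv> 2 * s * (cW + cL)"
  shows "2 * (W\<^sup>2 * L\<^sup>2 div (L * cL div P + 1)) \<le> (2 * A - 3) * ((A - 1) * (L * cL))"
proof -
  define N where "N = W\<^sup>2 * L\<^sup>2"
  define C where "C = L * cL"
  define R where "R = C div P + 1"
  define B where "B = A - 1"
  have "0 < P" "0 < C"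
    using assms(1-3,5) by (simp_all add: P_def C_def)
  have "C = C div P * P + C mod P" "C mod P < P"
    using \<open>0 < P\<close> by simp_all
  then have "C \<le> R * P"
    unfolding R_def add_mult_distrib by linarith
  have "A = 2 * (s * W * cW) + s * cW"
    by (simp add: A_def algebra_simps)
  moreover have "1 \<le> s * cW" "1 \<le> s * W * cW"
    using assms(1,2,4) by simp_all
  ultimately have B: "2 * (s * W * cW) \<le> B" "B \<le> 2 * A - 3"
    unfolding B_def by linarith+
  have cWcL: "cW + cL \<le> s * ((cW * cL) * (cW * cL))"
    using add_le_square_mult[OF assms(2,3)] assms(1) by (simp add: le_trans)
  have "2 * (N div R) * C \<le> 2 * (N div R) * (R * P)"
    using \<open>C \<le> R * P\<close> by simp
  also have "\<dots> \<le> 2 * N * P"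
    using div_times_less_eq_dividend[of N R] by (simp add: algebra_simps)
  also have "\<dots> = (4 * s * W * W * L * L) * (cW + cL)"
    by (simp add: N_def P_def power2_eq_square algebra_simps)
  also have "\<dots> \<le> (4 * s * W * W * L * L) * (s * ((cW * cL) * (cW * cL)))"
    using cWcL by (rule mult_left_mono) simp
  also have "\<dots> = ((2 * (s * W * cW)) * C) * ((2 * (s * W * cW)) * C)"
    by (simp add: C_def algebra_simps)
  also have "\<dots> \<le> (B * C) * (B * C)"
    using B(1) by (intro mult_mono) simp_all
  also have "\<dots> \<le> ((2 * A - 3) * B * C) * C"
    using mult_right_mono[OF B(2), of "B * C * C"] by (simp add: ac_simps)
  finally have "2 * (N div R) * C \<le> ((2 * A - 3) * B * C) * C" .
  with \<open>0 < C\<close> show ?thesis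
    by (simp add: N_def R_def B_def C_def mult.assoc)
qed

lemma block_length_bounds:
  fixes L cL P :: nat
  assumes "2 * cL \<le> P" "2 \<le> cL" "cL \<le> L"
  defines "R \<equiv> L * cL div P + 1"
  shows "(R - 1) * P \<le> L * cL" and "R \<le> L" and "2 * R \<le> L * cL"
proof -
  show "(R - 1) * P \<le> L * cL"
    by (simp add: R_def)
  then have "(R - 1) * 2 * cL \<le> L * cL"
    using assms(1) by (metis le_trans mult.assoc mult_le_mono2)
  then have "2 * (R - 1) \<le> L"
    using assms(2) by (simp add: ac_simps)
  then show "R \<le> L"
    using assms(2,3) by linarith
  then show "2 * R \<le> L * cL"
    using assms(2) mult_le_mono[of R L 2 cL] by (simp add: ac_simps)
qed

lemma power_mult_le_two_power:
  assumes "W \<le> 2 ^ a" "L \<le> 2 ^ b"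
  shows "real (W * L) ^ k \<le> 2 ^ ((a + b) * k)"
proof -
  have "W * L \<le> 2 ^ a * 2 ^ b"
    using assms by (rule mult_le_mono)
  then have "real (W * L) \<le> real (2 ^ (a + b))"
    by (simp only: of_nat_le_iff power_add)
  then show ?thesis
    by (simp add: power_mult power_mono)
qed

lemma parameter_bounds:
  fixes W L s cW cL A P R :: nat
  assumes "6 \<le> W" "2 \<le> L" "1 \<le> s"
    and cW_def: "cW = nat \<lceil>log 2 (2 * real W)\<rceil>" and cL_def: "cL = nat \<lceil>log 2 (2 * real L)\<rceil>"
    and A_def: "A = s * (2 * W + 1) * cW" and P_def: "P = 2 * s * (cW + cL)" and R_def: "R = L * cL div P + 1"
  shows "1 \<le> P" and "1 \<le> 2 * A - 3"
    and "2 * (W\<^sup>2 * L\<^sup>2 div R) \<le> (2 * A - 3) * ((A - 1) * (L * cL))"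
    and "2 * (max (4 * (A - 1)) (2 * (2 * A - 3) + 2) + 4) \<le> 8 * s * (2 * W + 1) * cW + 2"
    and "2 * (L * cL) + 2 * R + (R - 1) * P + 1 \<le> 4 * L * cL + 1"
    and "4 * 2 ^ ((R - 1) * P) + 2 * real R ^ 2 \<le> 4 * 2 ^ (L\<^sup>2) + 2 * real L ^ 2"
    and "1 / 2 ^ P \<le> 1 / real (W * L) ^ (2 * s)"
proof -
  have W: "2 * W \<le> 2 ^ cW" "2 \<le> cW" and L: "2 * L \<le> 2 ^ cL" "cL \<le> L" "2 \<le> cL"
    using ceiling_log2_bounds[of W] ceiling_log2_bounds[of L] assms(1,2) by (simp_all add: cW_def cL_def)
  have "2 * cL \<le> P"
    using assms(3) by (simp add: P_def mult_le_mono)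
  note R = block_length_bounds[OF this L(3,2), folded R_def]
  have "1 * 13 * 2 \<le> A"
    unfolding A_def using assms(1,3) W(2) by (intro mult_le_mono) simp_all
  moreover have "8 * s * (2 * W + 1) * cW = 8 * A"
    by (simp add: A_def algebra_simps)
  ultimately show "1 \<le> 2 * A - 3" "2 * (max (4 * (A - 1)) (2 * (2 * A - 3) + 2) + 4) \<le> 8 * s * (2 * W + 1) * cW + 2"
    by simp_all
  show "1 \<le> P"
    using \<open>2 * cL \<le> P\<close> L(3) by simp
  show "2 * (W\<^sup>2 * L\<^sup>2 div R) \<le> (2 * A - 3) * ((A - 1) * (L * cL))"
    using hinge_capacity[of s cW cL W L] assms W(2) L(3) by (simp add: A_def P_def R_def)
  show "2 * (L * cL) + 2 * R + (R - 1) * P + 1 \<le> 4 * L * cL + 1"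
    using R by simp
  have "(R - 1) * P \<le> L\<^sup>2"
    using le_trans[OF R(1) mult_le_mono2[OF L(2), of L]] by (simp add: power2_eq_square)
  then have "(2::real) ^ ((R - 1) * P) \<le> 2 ^ (L\<^sup>2)"
    by (rule power_increasing) simp
  moreover have "real R ^ 2 \<le> real L ^ 2"
    using R(2) by (simp add: power_mono)
  ultimately show "4 * 2 ^ ((R - 1) * P) + 2 * real R ^ 2 \<le> 4 * 2 ^ (L\<^sup>2) + 2 * real L ^ 2"
    by linarith
  have "real (W * L) ^ (2 * s) \<le> 2 ^ P"
    using power_mult_le_two_power[of W cW L cL "2 * s"] W(1) L(1) by (simp add: P_def ac_simps)
  then show "1 / 2 ^ P \<le> 1 / real (W * L) ^ (2 * s)"
    using assms(1,2) by (intro divide_left_mono) simp_all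
qed

theorem proposition31:
  fixes W L s :: nat and \<xi> :: "nat \<Rightarrow> real"
  assumes "W \<ge> 6" and "L \<ge> 2"
    and "\<And>i. i < W\<^sup>2 * L\<^sup>2 \<Longrightarrow> \<xi> i \<in> {0..1}"
  shows "\<exists>\<phi>. \<phi> \<in> NN (8 * s * (2 * W + 1) * nat \<lceil>log 2 (2 * real W)\<rceil> + 2)
                    (4 * L * nat \<lceil>log 2 (2 * real L)\<rceil> + 1) \<and>
             (4 * 2 ^ (L\<^sup>2) + 2 * real L ^ 2)-lipschitz_on UNIV \<phi> \<and>
             (\<forall>i < W\<^sup>2 * L\<^sup>2. \<bar>\<phi> (real i) - \<xi> i\<bar> \<le> 1 / real (W * L) ^ (2 * s)) \<and>
             (\<forall>t. \<phi> t \<in> {0..1})"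
proof (cases "s = 0")
  case True
  then show ?thesis
    using assms(3) by (intro exI[of _ "\<lambda>_. 0"] conjI zero_in_NN) (auto intro: lipschitz_onI)
next
  case False
  define cW cL where "cW = nat \<lceil>log 2 (2 * real W)\<rceil>" and "cL = nat \<lceil>log 2 (2 * real L)\<rceil>"
  define A P where "A = s * (2 * W + 1) * cW" and "P = 2 * s * (cW + cL)"
  define R where "R = L * cL div P + 1"
  note bounds = parameter_bounds[OF assms(1,2) _ cW_def cL_def A_def P_def R_def]
  obtain xs where xs: "\<And>m. xs m \<in> {0..1}"
    "\<And>i. i < W\<^sup>2 * L\<^sup>2 \<Longrightarrow> \<bar>bit_net P R (W\<^sup>2 * L\<^sup>2 div R + 1) xs (real i) - \<xi> i\<bar> \<le> 1 / 2 ^ P"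
    using bit_net_interpolates[where R = R and N = "W\<^sup>2 * L\<^sup>2" and z = \<xi> and P = P, OF _ assms(3)]
    by (auto simp: R_def)
  let ?\<phi> = "bit_net P R (W\<^sup>2 * L\<^sup>2 div R + 1) xs"
  \<comment> \<open>with \<open>J = A - 1\<close> and \<open>K = 2 A - 3\<close> each hinge network is \<open>4 A\<close> wide; two fit into \<open>8 A + 2\<close>\<close>
  have "?\<phi> \<in> NN (8 * s * (2 * W + 1) * cW + 2) (4 * L * cL + 1)"
    using bounds False
    by (intro bit_net_in_NN[where K = "2 * A - 3" and J = "A - 1" and C = "L * cL"]) (simp_all add: R_def)
  moreover have "(4 * 2 ^ (L\<^sup>2) + 2 * real L ^ 2)-lipschitz_on UNIV ?\<phi>"
    using bounds False xs(1) by (intro lipschitz_on_mono[OF bit_net_lipschitz]) (simp_all add: R_def)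
  moreover have "\<forall>i < W\<^sup>2 * L\<^sup>2. \<bar>?\<phi> (real i) - \<xi> i\<bar> \<le> 1 / real (W * L) ^ (2 * s)"
    using xs(2) bounds False by (auto intro: order_trans)
  moreover have "\<forall>t. ?\<phi> t \<in> {0..1}"
    unfolding bit_net_def using clamp01_range by blast
  ultimately show ?thesis
    unfolding cW_def cL_def by blast
qed

end
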